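(* For every $1\le j\le m+n$, as operators on $\widetilde T(\mathbb V)$, $$L(e_j)L(e_j^\ast)=\frac{K_j-K_j^{-1}}{q_j-q_j^{-1}}.$$
   Context: $q$ is an indeterminate, $m,n\ge1$, $[m+n]=\{1,\dots,m+n\}$. The Hecke algebra $\mathscr H_d$ is the $\mathbb C(q)$-algebra generated by $T_1,\dots,T_{d-1}$ with relations $(T_i-q)(T_i+q^{-1})=0$, $T_iT_{i+1}T_i=T_{i+1}T_iT_{i+1}$, $T_iT_j=T_jT_i$ ($|i-j|>1$); $T_w=T_{i_1}\cdots T_{i_k}$ for a reduced expression $w=s_{i_1}\cdots s_{i_k}\in\mathfrak S_d$; $\mathscr H_\infty$ is the inductive limit of $\mathscr H_0\subset\mathscr H_1\subset\cdots$, and $T\mapsto T^{\uparrow k}$ is the algebra endomorphism with $T_i^{\uparrow k}=T_{i+k}$. Parity: $\hat i=0$ if $i\le m$, $\hat i=1$ if $i>m$; $q_i=q^{(-1)^{\hat i}}$. $\gamma(i,j)=1$ if $i>j$ and $-1$ if $i\le j$. $\mathbb V$ is the $\mathbb C(q)$-vector space with basis $e_1,\dots,e_{m+n}$, $e_i$ of parity $\hat i$; $e_1^\ast,\dots,e_{m+n}^\ast$ is the dual basis. For $I=(i_d,\dots,i_1)\in[m+n]^d$, $e_I=e_{i_d}\otimes\cdots\otimes e_{i_1}$, written $e_{i_d}\cdots e_{i_1}$; $I.s_k$ is $I$ with the entries $i_k,i_{k+1}$ swapped. The right $\mathscr H_d$-action on $\mathbb V^{\otimes d}$: $e_I.T_k=(-1)^{\hat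 i_k\hat i_{k+1}}e_{I.s_k}$ if $i_k>i_{k+1}$; $=(-1)^{\hat i_k}q_{i_k}e_I$ if $i_k=i_{k+1}$; $=(-1)^{\hat i_k\hat i_{k+1}}e_{I.s_k}+(q-q^{-1})e_I$ if $i_k<i_{k+1}$. Set $\widetilde T_d(\mathbb V)=\mathbb V^{\otimes d}\otimes_{\mathscr H_d}\mathscr H_\infty$, $\widetilde T(\mathbb V)=\bigoplus_{d\ge0}\widetilde T_d(\mathbb V)$, with product $(e_{j_k}\cdots e_{j_1}\otimes T_\tau)\cdot(e_{i_d}\cdots e_{i_1}\otimes T_\sigma)=e_{j_k}\cdots e_{j_1}e_{i_d}\cdots e_{i_1}\otimes T_\tau^{\uparrow d}T_\sigma$. For $\varphi\in\widetilde T(\mathbb V)$, $L(\varphi)$ is left multiplication by $\varphi$; $L(e_i)$ uses $e_i\otimes1\in\widetilde T_1(\mathbb V)$. For $j\in[m+n]$, $f_j(e_r)=q_j^{-\delta_{jr}}e_r$ and $g_j(e_r)=e_r\otimes T_1^{-\gamma(j,r)}\in\widetilde T_1(\mathbb V)$, and $L(e_j^\ast)=0$ on $\widetilde T_0(\mathbb V)$, $$L(e_j^\ast)(e_{i_d}\cdots e_{i_1}\otimes T_\sigma)=\sum_{k=1}^d(-1)^{\hat j(\hat i_d+\cdots+\hat i_{k+1})}\langle e_j^\ast,e_{i_k}\rangle\,g_j(e_{i_d})\cdots g_j(e_{i_{k+1}})f_j(e_{i_{k-1}})\cdots f_j(e_{i_1})\cdot T_\sigma$$ (product in $\widetilde T(\mathbb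 V)$). The operator $K_j$ ($j\in[m+n]$) on $\widetilde T(\mathbb V)$ acts by $K_j(e_I\otimes T)=q_j^{\#\{r:\,i_r=j\}}\,e_I\otimes T$. *)

theory Defs
  imports Main "HOL-Computational_Algebra.Polynomial" "HOL-Computational_Algebra.Fraction_Field"
begin

(* Ground field C(q): fractions of complex polynomials; q is the indeterminate. *)
type_synonym K = "complex poly fract"

definition qq :: K where "qq = Fract [:0, 1:] 1"

definition par :: "nat \<Rightarrow> nat \<Rightarrow> nat" where
  "par m i = (if i \<le> m then 0 else 1)"
definition qsub :: "nat \<Rightarrow> nat \<Rightarrow> K" where
  "qsub m i = (if i \<le> m then qq else inverse qq)"

(* Basis symbols (I, w): I = [i_1, ..., i_d] (note: listed from i_1 to i_d) stands for
   e_{i_d} ... e_{i_1}; w = [k_1,...,k_r] is the word T_{k_1} ... T_{k_r} in the generators of H_infty.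
   The pair stands for e_I \<otimes> T_{k_1}...T_{k_r}. *)
type_synonym bs = "nat list \<times> nat list"
type_synonym vec = "bs \<Rightarrow> K"

definition bas :: "bs \<Rightarrow> vec" where "bas b = (\<lambda>c. if c = b then 1 else 0)"
definition smul :: "K \<Rightarrow> vec \<Rightarrow> vec" where "smul a x = (\<lambda>c. a * x c)"
definition vplus :: "vec \<Rightarrow> vec \<Rightarrow> vec" where "vplus x y = (\<lambda>c. x c + y c)"
definition vminus :: "vec \<Rightarrow> vec \<Rightarrow> vec" where "vminus x y = (\<lambda>c. x c - y c)"
definition supp :: "vec \<Rightarrow> bs set" where "supp x = {b. x b \<noteq> 0}"

definition ext :: "(bs \<Rightarrow> vec) \<Rightarrow> vec \<Rightarrow> vec" where
  "ext F x = (\<lambda>c. \<Sum>b\<in>supp x. x b * F b c)"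

(* product of basis symbols:
   (e_{j_k}..e_{j_1} \<otimes> T_\<tau>)(e_{i_d}..e_{i_1} \<otimes> T_\<sigma>) = e_{j_k}..e_{j_1} e_{i_d}..e_{i_1} \<otimes> T_\<tau>^{\<up>d} T_\<sigma> *)
definition bmul :: "bs \<Rightarrow> bs \<Rightarrow> bs" where
  "bmul a b = (fst b @ fst a, map (\<lambda>t. t + length (fst b)) (snd a) @ snd b)"
definition tmul :: "vec \<Rightarrow> vec \<Rightarrow> vec" where
  "tmul x y = (\<lambda>c. \<Sum>a\<in>supp x. \<Sum>b\<in>supp y. if bmul a b = c then x a * y b else 0)"
definition tone :: vec where "tone = bas ([], [])"
definition tprod :: "vec list \<Rightarrow> vec" where "tprod xs = foldr tmul xs tone"

definition valid :: "nat \<Rightarrow> nat \<Rightarrow> bs \<Rightarrow> bool" where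
  "valid m n b \<longleftrightarrow> set (fst b) \<subseteq> {1..m+n} \<and> 0 \<notin> set (snd b)"

(* e_I.T_k \<otimes> w  (right action of T_k on V^{\<otimes>d}, 1 \<le> k < d); i_k = I!(k-1), i_{k+1} = I!k *)
definition actT :: "nat \<Rightarrow> nat list \<Rightarrow> nat \<Rightarrow> nat list \<Rightarrow> vec" where
  "actT m I k w = (let a = I ! (k - 1); b = I ! k; s = I[k - 1 := b, k := a] in
     if b < a then smul ((-1) ^ (par m a * par m b)) (bas (s, w))
     else if a = b then smul ((-1) ^ (par m a) * qsub m a) (bas (I, w))
     else vplus (smul ((-1) ^ (par m a * par m b)) (bas (s, w))) (smul (qq - inverse qq) (bas (I, w))))"

definition heckerel :: "nat \<Rightarrow> nat \<Rightarrow> vec set" where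
  "heckerel m n =
     {vminus (vminus (bas (I, u @ [i, i] @ v)) (smul (qq - inverse qq) (bas (I, u @ [i] @ v)))) (bas (I, u @ v))
        | I u v i. valid m n (I, u @ v) \<and> 1 \<le> i}
   \<union> {vminus (bas (I, u @ [i, i + 1, i] @ v)) (bas (I, u @ [i + 1, i, i + 1] @ v))
        | I u v i. valid m n (I, u @ v) \<and> 1 \<le> i}
   \<union> {vminus (bas (I, u @ [i, k] @ v)) (bas (I, u @ [k, i] @ v))
        | I u v i k. valid m n (I, u @ v) \<and> 1 \<le> i \<and> 1 \<le> k \<and> i + 1 < k}"

(* balancing relations of the tensor product over H_d: e_I.T_k \<otimes> h = e_I \<otimes> T_k h *)
definition balrel :: "nat \<Rightarrow> nat \<Rightarrow> vec set" where
  "balrel m n = {vminus (actT m I k w) (bas (I, k # w)) | I k w. valid m n (I, w) \<and> 1 \<le> k \<and> k < length I}"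

definition rspan :: "vec set \<Rightarrow> vec set" where
  "rspan R = {x. \<exists>S c. finite S \<and> S \<subseteq> R \<and> x = (\<lambda>b. \<Sum>r\<in>S. c r * r b)}"

(* equality in \<widetilde>T(V) = (V^{\<otimes>*} \<otimes> free algebra) / relations *)
definition tequiv :: "nat \<Rightarrow> nat \<Rightarrow> vec \<Rightarrow> vec \<Rightarrow> bool" where
  "tequiv m n x y \<longleftrightarrow> vminus x y \<in> rspan (heckerel m n \<union> balrel m n)"

(* representatives of elements of \<widetilde>T(V) *)
definition freeT :: "nat \<Rightarrow> nat \<Rightarrow> vec set" where
  "freeT m n = {x. finite (supp x) \<and> supp x \<subseteq> {b. valid m n b}}"

definition Lvec :: "nat \<Rightarrow> bs \<Rightarrow> vec" where
  "Lvec j b = tmul (bas ([j], [])) (bas b)"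

(* f_j(e_r), g_j(e_r) in \<widetilde>T_1(V); T_1^{-1} = T_1 - (q - q^{-1}) *)
definition fvec :: "nat \<Rightarrow> nat \<Rightarrow> nat \<Rightarrow> vec" where
  "fvec m j r = smul (if j = r then inverse (qsub m j) else 1) (bas ([r], []))"
definition gvec :: "nat \<Rightarrow> nat \<Rightarrow> nat \<Rightarrow> vec" where
  "gvec m j r = (if j > r then vminus (bas ([r], [1])) (smul (qq - inverse qq) (bas ([r], [])))
                 else bas ([r], [1]))"

definition Ldual :: "nat \<Rightarrow> nat \<Rightarrow> bs \<Rightarrow> vec" where
  "Ldual m j b = (let I = fst b; w = snd b; d = length I in
     (\<lambda>c. \<Sum>k\<in>{1..d}.
        ((-1) ^ (par m j * sum_list (map (par m) (drop k I))) * (if I ! (k - 1) = j then 1 else 0))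
        * tmul (tprod (map (gvec m j) (rev (drop k I)) @ map (fvec m j) (rev (take (k - 1) I))))
               (bas ([], w)) c))"

definition Kvec :: "nat \<Rightarrow> nat \<Rightarrow> bs \<Rightarrow> vec" where
  "Kvec m j b = smul (qsub m j ^ length (filter (\<lambda>i. i = j) (fst b))) (bas b)"
definition Kinv :: "nat \<Rightarrow> nat \<Rightarrow> bs \<Rightarrow> vec" where
  "Kinv m j b = smul (inverse (qsub m j) ^ length (filter (\<lambda>i. i = j) (fst b))) (bas b)"

end

theory Submission
  imports Defs
begin

text \<open>
  Consider the summand of \<open>L(e\<^sub>j)L(e\<^sub>j\<^sup>*)(e\<^sub>I \<otimes> T)\<close> belonging to a position \<open>k\<close> with
  \<open>i\<^sub>k = j\<close>. The letter \<open>e\<^sub>j\<close> put in front has to be moved back past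
  \<open>g\<^sub>j(e\<^sub>i\<^sub>d) \<cdots> g\<^sub>j(e\<^sub>i\<^sub>k\<^sub>+\<^sub>1)\<close>, and the balancing relation \<open>e\<^sub>I.T\<^sub>r \<otimes> h = e\<^sub>I \<otimes> T\<^sub>r h\<close> gives
  \<open>e\<^sub>j g\<^sub>j(e\<^sub>r) = (-1)\<^bsup>\<hat>j\<hat>r\<^esup> q\<^sub>j\<^bsup>\<delta>\<^sub>j\<^sub>r\<^esup> e\<^sub>r e\<^sub>j\<close>; the factor \<open>T\<^sub>1\<^bsup>-\<gamma>(j,r)\<^esup>\<close> in \<open>g\<^sub>j\<close> is what makes
  this work. The signs cancel those of \<open>L(e\<^sub>j\<^sup>*)\<close>, so the summand is \<open>q\<^sub>j\<^bsup>a-b\<^esup> e\<^sub>I \<otimes> T\<close>, where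
  \<open>a\<close> and \<open>b\<close> count the occurrences of \<open>j\<close> after and before position \<open>k\<close> (\<open>b\<close> comes
  from the \<open>f\<^sub>j\<close>'s). Summed over the \<open>N\<close> occurrences this is the \<open>q\<close>-number
  \<open>(q\<^sub>j\<^sup>N - q\<^sub>j\<^sup>-\<^sup>N)/(q\<^sub>j - q\<^sub>j\<^sup>-\<^sup>1)\<close>, the eigenvalue of \<open>(K\<^sub>j - K\<^sub>j\<^sup>-\<^sup>1)/(q\<^sub>j - q\<^sub>j\<^sup>-\<^sup>1)\<close> on \<open>e\<^sub>I \<otimes> T\<close>.
\<close>

section \<open>Equivalence modulo the relations\<close>

lemma rspan_zero: "(\<lambda>b. 0) \<in> rspan S"
  unfolding rspan_def by (intro CollectI exI[of _ "{}"]) auto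

lemma rspan_base: "r \<in> S \<Longrightarrow> r \<in> rspan S"
  unfolding rspan_def by (intro CollectI exI[of _ "{r}"] exI[of _ "\<lambda>_. 1"]) auto

lemma rspan_smul:
  assumes "x \<in> rspan S"
  shows "smul a x \<in> rspan S"
proof -
  obtain T c where "finite T" "T \<subseteq> S" "x = (\<lambda>b. \<Sum>r\<in>T. c r * r b)"
    using assms unfolding rspan_def by auto
  then show ?thesis
    unfolding rspan_def smul_def
    by (intro CollectI exI[of _ T] exI[of _ "\<lambda>r. a * c r"]) (auto simp: sum_distrib_left mult.assoc)
qed

lemma rspan_add:
  assumes "x \<in> rspan S" and "y \<in> rspan S"
  shows "vplus x y \<in> rspan S"
proof -
  obtain T c T' c' where T: "finite T" "T \<subseteq> S" "x = (\<lambda>b. \<Sum>r\<in>T. c r * r b)"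
    and T': "finite T'" "T' \<subseteq> S" "y = (\<lambda>b. \<Sum>r\<in>T'. c' r * r b)"
    using assms unfolding rspan_def by auto
  define d where "d r = (if r \<in> T then c r else 0) + (if r \<in> T' then c' r else 0)" for r
  have "(\<Sum>r\<in>T \<union> T'. (if r \<in> T then c r else 0) * r b) = (\<Sum>r\<in>T. c r * r b)"
    and "(\<Sum>r\<in>T \<union> T'. (if r \<in> T' then c' r else 0) * r b) = (\<Sum>r\<in>T'. c' r * r b)" for b
    by (rule sum.mono_neutral_cong_right; use T T' in auto)+
  then have "vplus x y = (\<lambda>b. \<Sum>r\<in>T \<union> T'. d r * r b)"
    by (simp add: vplus_def d_def T(3) T'(3) distrib_right sum.distrib)
  then show ?thesis
    unfolding rspan_def using T T' by (intro CollectI exI[of _ "T \<union> T'"] exI[of _ d]) auto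
qed

lemma rspan_sum: "(\<And>i. i \<in> F \<Longrightarrow> v i \<in> rspan S) \<Longrightarrow> (\<lambda>c. \<Sum>i\<in>F. v i c) \<in> rspan S"
proof (induction F rule: infinite_finite_induct)
  case (insert i F)
  then show ?case using rspan_add[of "v i" S "\<lambda>c. \<Sum>i\<in>F. v i c"] by (simp add: vplus_def)
qed (simp_all add: rspan_zero)

lemma tequiv_refl: "tequiv m n x x"
  unfolding tequiv_def vminus_def using rspan_zero by simp

lemma tequiv_sym:
  assumes "tequiv m n x y"
  shows "tequiv m n y x"
proof -
  have "vminus y x = smul (-1) (vminus x y)"
    by (simp add: fun_eq_iff vminus_def smul_def)
  then show ?thesis
    using assms unfolding tequiv_def by (simp add: rspan_smul)
qed

lemma tequiv_trans [trans]:
  assumes "tequiv m n x y" and "tequiv m n y z"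
  shows "tequiv m n x z"
proof -
  have "vminus x z = vplus (vminus x y) (vminus y z)"
    by (simp add: fun_eq_iff vminus_def vplus_def)
  then show ?thesis
    using assms unfolding tequiv_def by (simp add: rspan_add)
qed

lemma eq_tequiv_trans [trans]: "x = y \<Longrightarrow> tequiv m n y z \<Longrightarrow> tequiv m n x z"
  and tequiv_eq_trans [trans]: "tequiv m n x y \<Longrightarrow> y = z \<Longrightarrow> tequiv m n x z"
  by simp_all

lemma tequiv_smul:
  assumes "tequiv m n x y"
  shows "tequiv m n (smul a x) (smul a y)"
proof -
  have "vminus (smul a x) (smul a y) = smul a (vminus x y)"
    by (simp add: fun_eq_iff vminus_def smul_def right_diff_distrib)
  then show ?thesis
    using assms unfolding tequiv_def by (simp add: rspan_smul)
qed

lemma tequiv_vminus_left: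
  assumes "tequiv m n x y"
  shows "tequiv m n (vminus x z) (vminus y z)"
proof -
  have "vminus (vminus x z) (vminus y z) = vminus x y"
    by (simp add: fun_eq_iff vminus_def)
  then show ?thesis
    using assms unfolding tequiv_def by simp
qed

lemma tequiv_sum:
  assumes "\<And>i. i \<in> F \<Longrightarrow> tequiv m n (v i) (w i)"
  shows "tequiv m n (\<lambda>c. \<Sum>i\<in>F. v i c) (\<lambda>c. \<Sum>i\<in>F. w i c)"
proof -
  have "vminus (\<lambda>c. \<Sum>i\<in>F. v i c) (\<lambda>c. \<Sum>i\<in>F. w i c) = (\<lambda>c. \<Sum>i\<in>F. vminus (v i) (w i) c)"
    unfolding vminus_def sum_subtractf ..
  then show ?thesis
    using assms unfolding tequiv_def by (simp add: rspan_sum)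
qed

lemma tequiv_ext:
  assumes "\<And>b. b \<in> supp Z \<Longrightarrow> tequiv m n (F b) (G b)"
  shows "tequiv m n (ext F Z) (ext G Z)"
proof -
  have "ext H Z = (\<lambda>c. \<Sum>b\<in>supp Z. smul (Z b) (H b) c)" for H
    unfolding ext_def smul_def ..
  then show ?thesis
    using assms by (simp add: tequiv_sum tequiv_smul)
qed

lemma tequiv_balance:
  assumes "valid m n (I, w)" and "1 \<le> k" and "k < length I"
  shows "tequiv m n (bas (I, k # w)) (actT m I k w)"
proof -
  have "vminus (actT m I k w) (bas (I, k # w)) \<in> balrel m n"
    unfolding balrel_def mem_Collect_eq using assms by (intro exI[of _ I] exI[of _ k] exI[of _ w]) simp
  then have "tequiv m n (actT m I k w) (bas (I, k # w))"
    by (simp add: tequiv_def rspan_base)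
  then show ?thesis
    by (rule tequiv_sym)
qed

lemma smul_smul: "smul a (smul b x) = smul (a * b) x"
  unfolding smul_def by (simp add: mult.assoc)

lemma bas_apply: "bas b c = (if c = b then 1 else 0)"
  unfolding bas_def ..

lemma supp_bas [simp]: "supp (bas b) = {b}"
  unfolding supp_def bas_def by auto

lemma supp_smul: "supp (smul a x) \<subseteq> supp x"
  unfolding supp_def smul_def by auto

lemma supp_vminus: "supp (vminus x y) \<subseteq> supp x \<union> supp y"
  unfolding supp_def vminus_def by auto

lemma supp_sum: "supp (\<lambda>c. \<Sum>i\<in>F. v i c) \<subseteq> (\<Union>i\<in>F. supp (v i))"
  unfolding supp_def using sum.not_neutral_contains_not_neutral by fastforce

lemma supp_ext: "supp (ext F x) \<subseteq> (\<Union>b\<in>supp x. supp (F b))"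
  unfolding ext_def using supp_sum[of "\<lambda>b c. x b * F b c" "supp x"] by (auto simp: supp_def)

lemma freeT_finite_supp: "x \<in> freeT m n \<Longrightarrow> finite (supp x)"
  unfolding freeT_def by simp

lemma freeT_valid: "x \<in> freeT m n \<Longrightarrow> b \<in> supp x \<Longrightarrow> valid m n b"
  unfolding freeT_def by auto

lemma freeT_bas: "valid m n b \<Longrightarrow> bas b \<in> freeT m n"
  unfolding freeT_def by simp

lemma freeT_supp_subset:
  assumes "supp y \<subseteq> A" and "finite A" and "A \<subseteq> {b. valid m n b}"
  shows "y \<in> freeT m n"
  unfolding freeT_def using finite_subset[OF assms(1,2)] assms(1,3) by simp

lemma freeT_smul: "x \<in> freeT m n \<Longrightarrow> smul a x \<in> freeT m n"
  by (rule freeT_supp_subset[OF supp_smul]) (auto simp: freeT_def)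

lemma freeT_vminus: "x \<in> freeT m n \<Longrightarrow> y \<in> freeT m n \<Longrightarrow> vminus x y \<in> freeT m n"
  by (rule freeT_supp_subset[OF supp_vminus]) (auto simp: freeT_def)

lemma freeT_sum:
  "finite F \<Longrightarrow> (\<And>i. i \<in> F \<Longrightarrow> v i \<in> freeT m n) \<Longrightarrow> (\<lambda>c. \<Sum>i\<in>F. v i c) \<in> freeT m n"
  by (rule freeT_supp_subset[OF supp_sum]) (auto simp: freeT_def)

lemma freeT_ext:
  "x \<in> freeT m n \<Longrightarrow> (\<And>b. b \<in> supp x \<Longrightarrow> F b \<in> freeT m n) \<Longrightarrow> ext F x \<in> freeT m n"
  by (rule freeT_supp_subset[OF supp_ext]) (auto simp: freeT_def)

lemma ext_bas: "ext F (bas b) = F b"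
  unfolding ext_def supp_bas by (simp add: bas_def)

lemma ext_bas_id:
  assumes "finite (supp x)"
  shows "ext bas x = x"
proof
  fix c
  have "ext bas x c = (\<Sum>b\<in>supp x. if b = c then x c else 0)"
    unfolding ext_def bas_def by (intro sum.cong) auto
  also have "\<dots> = x c"
    using assms by (simp add: supp_def)
  finally show "ext bas x c = x c" .
qed

lemma ext_superset:
  assumes "finite A" and "supp x \<subseteq> A"
  shows "ext F x c = (\<Sum>b\<in>A. x b * F b c)"
  unfolding ext_def using assms by (intro sum.mono_neutral_left) (auto simp: supp_def)

lemma ext_ext:
  assumes "finite (supp x)" and "\<And>b. b \<in> supp x \<Longrightarrow> finite (supp (G b))"
  shows "ext F (ext G x) = ext (\<lambda>b. ext F (G b)) x"
proof
  fix c
  define D where "D = (\<Union>b\<in>supp x. supp (G b))"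
  have D: "finite D" "\<And>b. b \<in> supp x \<Longrightarrow> supp (G b) \<subseteq> D"
    using assms unfolding D_def by auto
  have "ext F (ext G x) c = (\<Sum>d\<in>D. (\<Sum>b\<in>supp x. x b * G b d) * F d c)"
    using D supp_ext[of G x] by (subst ext_superset[of D]) (auto simp: ext_def D_def)
  also have "\<dots> = (\<Sum>b\<in>supp x. x b * (\<Sum>d\<in>D. G b d * F d c))"
    by (simp only: sum_distrib_left sum_distrib_right mult.assoc) (rule sum.swap)
  also have "\<dots> = ext (\<lambda>b. ext F (G b)) x c"
    unfolding ext_def[of _ x] by (rule sum.cong[OF refl]) (simp add: ext_superset[OF D(1) D(2)])
  finally show "ext F (ext G x) c = ext (\<lambda>b. ext F (G b)) x c" .
qed

lemma ext_smul_fun: "ext (\<lambda>b. smul a (F b)) x = smul a (ext F x)"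
  unfolding ext_def smul_def sum_distrib_left by (rule ext, rule sum.cong[OF refl]) (simp only: mult.left_commute)

lemma ext_vminus_fun: "ext (\<lambda>b. vminus (F b) (G b)) x = vminus (ext F x) (ext G x)"
  unfolding ext_def vminus_def right_diff_distrib sum_subtractf ..

lemma ext_smul: "ext F (smul a x) = smul a (ext F x)"
proof (cases "a = 0")
  case True
  then show ?thesis by (simp add: ext_def smul_def supp_def)
next
  case False
  then have "supp (smul a x) = supp x"
    by (auto simp: supp_def smul_def)
  then show ?thesis
    unfolding ext_def by (simp only: smul_def sum_distrib_left mult.assoc)
qed

lemma ext_vminus:
  assumes "finite (supp x)" and "finite (supp y)"
  shows "ext F (vminus x y) = vminus (ext F x) (ext F y)"
proof
  fix c
  have A: "finite (supp x \<union> supp y)" using assms by simp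
  have "ext F (vminus x y) c = (\<Sum>b\<in>supp x \<union> supp y. (x b - y b) * F b c)"
    using ext_superset[OF A supp_vminus] by (simp add: vminus_def)
  also have "\<dots> = ext F x c - ext F y c"
    unfolding left_diff_distrib sum_subtractf ext_superset[OF A Un_upper1] ext_superset[OF A Un_upper2] ..
  finally show "ext F (vminus x y) c = vminus (ext F x) (ext F y) c"
    by (simp add: vminus_def)
qed

lemma finite_supp_ext:
  "finite (supp x) \<Longrightarrow> (\<And>b. b \<in> supp x \<Longrightarrow> finite (supp (F b))) \<Longrightarrow> finite (supp (ext F x))"
  using supp_ext[of F x] finite_subset by (metis (no_types, lifting) finite_UN_I)

section \<open>The product\<close>

lemma bmul_assoc: "bmul (bmul a b) c = bmul a (bmul b c)"
  unfolding bmul_def by (simp add: add.assoc)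

lemma valid_bmul: "valid m n a \<Longrightarrow> valid m n b \<Longrightarrow> valid m n (bmul a b)"
  unfolding valid_def bmul_def by auto

lemma tmul_bas_bas: "tmul (bas a) (bas b) = bas (bmul a b)"
  unfolding tmul_def supp_bas by (auto simp: bas_def)

lemma tmul_eq_ext_left: "tmul x y = ext (\<lambda>a. tmul (bas a) y) x"
proof
  fix c
  have bas_left: "tmul (bas a) y c = (\<Sum>b\<in>supp y. if bmul a b = c then y b else 0)" for a
    unfolding tmul_def supp_bas by (simp add: bas_apply cong: if_cong)
  show "tmul x y c = ext (\<lambda>a. tmul (bas a) y) x c"
    unfolding ext_def tmul_def[of x y] bas_left sum_distrib_left by (rule sum.cong[OF refl])+ simp
qed

lemma tmul_eq_ext_right: "tmul x y = ext (\<lambda>b. tmul x (bas b)) y"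
proof
  fix c
  have bas_right: "tmul x (bas b) c = (\<Sum>a\<in>supp x. if bmul a b = c then x a else 0)" for b
    unfolding tmul_def supp_bas by (simp add: bas_apply cong: if_cong)
  have "ext (\<lambda>b. tmul x (bas b)) y c = (\<Sum>b\<in>supp y. \<Sum>a\<in>supp x. if bmul a b = c then x a * y b else 0)"
    unfolding ext_def bas_right sum_distrib_left by (rule sum.cong[OF refl])+ simp
  also have "\<dots> = tmul x y c"
    unfolding tmul_def by (rule sum.swap)
  finally show "tmul x y c = ext (\<lambda>b. tmul x (bas b)) y c" ..
qed

lemma tmul_bas_left: "tmul (bas a) y = ext (\<lambda>b. bas (bmul a b)) y"
  by (subst tmul_eq_ext_right) (simp add: tmul_bas_bas)

lemma finite_supp_tmul: "finite (supp x) \<Longrightarrow> finite (supp y) \<Longrightarrow> finite (supp (tmul x y))"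
  unfolding tmul_eq_ext_left[of x] tmul_bas_left by (intro finite_supp_ext) simp_all

lemma freeT_tmul: "x \<in> freeT m n \<Longrightarrow> y \<in> freeT m n \<Longrightarrow> tmul x y \<in> freeT m n"
  unfolding tmul_eq_ext_left[of x] tmul_bas_left
  by (intro freeT_ext freeT_bas valid_bmul) (auto dest: freeT_valid)

lemma tmul_smul_left: "tmul (smul a x) y = smul a (tmul x y)"
  by (subst (1 2) tmul_eq_ext_left) (rule ext_smul)

lemma tmul_smul_right: "tmul x (smul a y) = smul a (tmul x y)"
  by (subst (1 2) tmul_eq_ext_right) (rule ext_smul)

lemma tmul_vminus_left:
  "finite (supp x) \<Longrightarrow> finite (supp x') \<Longrightarrow> tmul (vminus x x') y = vminus (tmul x y) (tmul x' y)"
  by (subst (1 2 3) tmul_eq_ext_left) (rule ext_vminus)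

lemma tmul_vminus_right:
  "finite (supp y) \<Longrightarrow> finite (supp y') \<Longrightarrow> tmul x (vminus y y') = vminus (tmul x y) (tmul x y')"
  by (subst (1 2 3) tmul_eq_ext_right) (rule ext_vminus)

lemma tmul_ext_left:
  assumes "finite (supp x)" and "\<And>b. b \<in> supp x \<Longrightarrow> finite (supp (F b))"
  shows "tmul (ext F x) z = ext (\<lambda>b. tmul (F b) z) x"
  by (subst (1 2) tmul_eq_ext_left) (rule ext_ext[OF assms])

lemma tmul_ext_right:
  assumes "finite (supp x)" and "\<And>b. b \<in> supp x \<Longrightarrow> finite (supp (F b))"
  shows "tmul z (ext F x) = ext (\<lambda>b. tmul z (F b)) x"
  by (subst (1 2) tmul_eq_ext_right) (rule ext_ext[OF assms])

lemma tmul_assoc: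
  assumes "finite (supp x)" and "finite (supp y)" and "finite (supp z)"
  shows "tmul (tmul x y) z = tmul x (tmul y z)"
proof -
  have bas_bas: "tmul (tmul (bas a) (bas b)) z = tmul (bas a) (tmul (bas b) z)" for a b
    using assms(3) by (simp add: tmul_bas_bas tmul_bas_left ext_ext ext_bas bmul_assoc)
  have bas: "tmul (tmul (bas a) y) z = tmul (bas a) (tmul y z)" for a
  proof -
    have "tmul (tmul (bas a) y) z = ext (\<lambda>b. tmul (tmul (bas a) (bas b)) z) y"
      by (subst tmul_eq_ext_right) (simp add: tmul_ext_left assms(2) finite_supp_tmul)
    also have "\<dots> = tmul (bas a) (tmul y z)"
      unfolding bas_bas by (subst (2) tmul_eq_ext_left) (simp add: tmul_ext_right assms finite_supp_tmul)
    finally show ?thesis .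
  qed
  have "tmul (tmul x y) z = ext (\<lambda>a. tmul (tmul (bas a) y) z) x"
    by (subst tmul_eq_ext_left) (simp add: tmul_ext_left assms finite_supp_tmul)
  also have "\<dots> = tmul x (tmul y z)"
    unfolding bas by (rule tmul_eq_ext_left[symmetric])
  finally show ?thesis .
qed

abbreviation letter :: "nat \<Rightarrow> vec" where
  "letter p \<equiv> bas ([p], [])"

text \<open>
  Left multiplication by \<open>e\<^sub>p\<close>; as letter lists run from \<open>i\<^sub>1\<close> to \<open>i\<^sub>d\<close>, the letter is appended
  at the end. It is defined coefficientwise, so that no finiteness is needed to see that it
  maps relations to relations.
\<close>
definition lmul_letter :: "nat \<Rightarrow> vec \<Rightarrow> vec" where
  "lmul_letter p y c = (if fst c \<noteq> [] \<and> last (fst c) = p then y (butlast (fst c), snd c) else 0)"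

lemma lmul_letter_bas: "lmul_letter p (bas b) = bas (fst b @ [p], snd b)"
proof
  fix c :: bs
  obtain C v where "c = (C, v)" by (cases c)
  then show "lmul_letter p (bas b) c = bas (fst b @ [p], snd b) c"
    unfolding lmul_letter_def bas_apply by (cases C rule: rev_cases) auto
qed

lemma lmul_letter_smul: "lmul_letter p (smul a x) = smul a (lmul_letter p x)"
  unfolding lmul_letter_def smul_def by auto

lemma lmul_letter_vplus: "lmul_letter p (vplus x y) = vplus (lmul_letter p x) (lmul_letter p y)"
  unfolding lmul_letter_def vplus_def by auto

lemma lmul_letter_vminus: "lmul_letter p (vminus x y) = vminus (lmul_letter p x) (lmul_letter p y)"
  unfolding lmul_letter_def vminus_def by auto

lemma lmul_letter_ext: "lmul_letter p (ext F x) = ext (\<lambda>b. lmul_letter p (F b)) x"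
  unfolding lmul_letter_def ext_def by auto

lemma lmul_letter_eq_ext:
  assumes "finite (supp y)"
  shows "lmul_letter p y = ext (\<lambda>b. bas (fst b @ [p], snd b)) y"
  using lmul_letter_ext[of p bas y] by (simp add: ext_bas_id[OF assms] lmul_letter_bas)

lemma tmul_letter_left: "finite (supp y) \<Longrightarrow> tmul (letter p) y = lmul_letter p y"
  unfolding tmul_bas_left by (simp add: bmul_def lmul_letter_eq_ext)

lemma ext_Lvec: "ext (Lvec j) y = tmul (letter j) y"
  unfolding Lvec_def by (rule tmul_eq_ext_right[symmetric])

lemma lmul_letter_rspan:
  assumes "\<And>r. r \<in> S \<Longrightarrow> lmul_letter p r \<in> S" and "x \<in> rspan S"
  shows "lmul_letter p x \<in> rspan S"
proof -
  obtain T c where T: "finite T" "T \<subseteq> S" "x = (\<lambda>b. \<Sum>r\<in>T. c r * r b)"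
    using assms(2) unfolding rspan_def by auto
  then have "lmul_letter p x = (\<lambda>b. \<Sum>r\<in>T. smul (c r) (lmul_letter p r) b)"
    unfolding lmul_letter_def smul_def by auto
  also have "\<dots> \<in> rspan S"
    using T assms(1) by (intro rspan_sum rspan_smul rspan_base) auto
  finally show ?thesis .
qed

lemma lmul_letter_actT:
  assumes "1 \<le> k" and "k < length I"
  shows "lmul_letter p (actT m I k w) = actT m (I @ [p]) k w"
proof -
  have "(I @ [p]) ! (k - 1) = I ! (k - 1)" and "(I @ [p]) ! k = I ! k"
    using assms by (auto simp: nth_append)
  moreover have "(I @ [p])[k - 1 := a, k := b] = I[k - 1 := a, k := b] @ [p]" for a b
    using assms by (simp add: list_update_append1)
  ultimately show ?thesis
    unfolding actT_def Let_def by (simp add: lmul_letter_smul lmul_letter_vplus lmul_letter_bas)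
qed

lemma lmul_letter_heckerel:
  assumes "r \<in> heckerel m n" and "1 \<le> p" and "p \<le> m + n"
  shows "lmul_letter p r \<in> heckerel m n"
proof -
  have valid_snoc: "valid m n (I, w) \<Longrightarrow> valid m n (I @ [p], w)" for I w
    using assms(2,3) by (auto simp: valid_def)
  from assms(1) consider
      (quadratic) I u v i where "r = vminus (vminus (bas (I, u @ [i, i] @ v))
          (smul (qq - inverse qq) (bas (I, u @ [i] @ v)))) (bas (I, u @ v))"
        "valid m n (I, u @ v)" "1 \<le> i"
    | (braid) I u v i where "r = vminus (bas (I, u @ [i, i + 1, i] @ v)) (bas (I, u @ [i + 1, i, i + 1] @ v))"
        "valid m n (I, u @ v)" "1 \<le> i"
    | (commute) I u v i k where "r = vminus (bas (I, u @ [i, k] @ v)) (bas (I, u @ [k, i] @ v))"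
        "valid m n (I, u @ v)" "1 \<le> i" "1 \<le> k" "i + 1 < k"
    unfolding heckerel_def by blast
  then show ?thesis
  proof cases
    case quadratic
    then show ?thesis unfolding heckerel_def
      by (intro UnI1 CollectI exI[of _ "I @ [p]"] exI[of _ u] exI[of _ v] exI[of _ i])
        (simp add: lmul_letter_vminus lmul_letter_smul lmul_letter_bas valid_snoc)
  next
    case braid
    then show ?thesis unfolding heckerel_def
      by (intro UnI1 UnI2 CollectI exI[of _ "I @ [p]"] exI[of _ u] exI[of _ v] exI[of _ i])
        (simp add: lmul_letter_vminus lmul_letter_bas valid_snoc)
  next
    case commute
    then show ?thesis unfolding heckerel_def
      by (intro UnI2 CollectI exI[of _ "I @ [p]"] exI[of _ u] exI[of _ v] exI[of _ i] exI[of _ k])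
        (simp add: lmul_letter_vminus lmul_letter_bas valid_snoc)
  qed
qed

lemma lmul_letter_balrel:
  assumes "r \<in> balrel m n" and "1 \<le> p" and "p \<le> m + n"
  shows "lmul_letter p r \<in> balrel m n"
proof -
  obtain I k w where r: "r = vminus (actT m I k w) (bas (I, k # w))"
    and valid: "valid m n (I, w)" and k: "1 \<le> k" "k < length I"
    using assms(1) unfolding balrel_def by blast
  have "valid m n (I @ [p], w)"
    using valid assms(2,3) by (auto simp: valid_def)
  then show ?thesis
    unfolding balrel_def r using k
    by (intro CollectI exI[of _ "I @ [p]"] exI[of _ k] exI[of _ w])
      (simp add: lmul_letter_vminus lmul_letter_bas lmul_letter_actT)
qed

lemma tequiv_lmul_letter:
  assumes "tequiv m n x y" and "1 \<le> p" and "p \<le> m + n"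
  shows "tequiv m n (lmul_letter p x) (lmul_letter p y)"
  using assms lmul_letter_rspan[of "heckerel m n \<union> balrel m n" p] lmul_letter_heckerel lmul_letter_balrel
  unfolding tequiv_def lmul_letter_vminus[symmetric] by blast

section \<open>Moving \<open>e\<^sub>j\<close> to the front\<close>

abbreviation count_letter :: "nat \<Rightarrow> nat list \<Rightarrow> nat" where
  "count_letter j I \<equiv> length (filter (\<lambda>i. i = j) I)"

lemma freeT_gvec: "1 \<le> p \<Longrightarrow> p \<le> m + n \<Longrightarrow> gvec m j p \<in> freeT m n"
  unfolding gvec_def by (auto intro!: freeT_vminus freeT_smul freeT_bas simp: valid_def)

lemma freeT_fvec: "1 \<le> p \<Longrightarrow> p \<le> m + n \<Longrightarrow> fvec m j p \<in> freeT m n"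
  unfolding fvec_def by (auto intro!: freeT_smul freeT_bas simp: valid_def)

lemma freeT_foldr_tmul:
  "(\<And>x. x \<in> set xs \<Longrightarrow> x \<in> freeT m n) \<Longrightarrow> y \<in> freeT m n \<Longrightarrow> foldr tmul xs y \<in> freeT m n"
  by (induction xs) (auto intro: freeT_tmul)

lemma actT_last_pair:
  "actT m (B @ [p, j]) (Suc (length B)) v =
    (if j < p then smul ((-1) ^ (par m p * par m j)) (bas (B @ [j, p], v))
     else if p = j then smul ((-1) ^ par m p * qsub m p) (bas (B @ [p, j], v))
     else vplus (smul ((-1) ^ (par m p * par m j)) (bas (B @ [j, p], v)))
       (smul (qq - inverse qq) (bas (B @ [p, j], v))))"
proof -
  have "(B @ [p, j]) ! length B = p" and "(B @ [p, j]) ! Suc (length B) = j"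
    by (auto simp: nth_append)
  moreover have "(B @ [p, j])[length B := j, Suc (length B) := p] = B @ [j, p]"
    by (simp add: list_update_append)
  ultimately show ?thesis
    unfolding actT_def Let_def by simp
qed

lemma tmul_letter_gvec_bas:
  "tmul (tmul (letter j) (gvec m j p)) (bas (B, v)) =
    (if p < j then vminus (bas (B @ [p, j], Suc (length B) # v)) (smul (qq - inverse qq) (bas (B @ [p, j], v)))
     else bas (B @ [p, j], Suc (length B) # v))"
  by (simp add: gvec_def tmul_vminus_left tmul_vminus_right tmul_smul_left tmul_smul_right
      tmul_bas_bas bmul_def finite_supp_tmul finite_subset[OF supp_smul])

text \<open>
  \<open>e\<^sub>j g\<^sub>j(e\<^sub>p) e\<^sub>B \<otimes> T\<^sub>v\<close> is \<open>e\<^sub>B\<^sub>p\<^sub>j \<otimes> T\<^sub>|\<^sub>B\<^sub>|\<^sub>+\<^sub>1 T\<^sub>v\<close> corrected by \<open>-(q - q\<^sup>-\<^sup>1) e\<^sub>B\<^sub>p\<^sub>j \<otimes> T\<^sub>v\<close> when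
  \<open>p < j\<close>, and the balancing relation replaces \<open>T\<^sub>|\<^sub>B\<^sub>|\<^sub>+\<^sub>1\<close> by the action on the letters \<open>p j\<close>:
  the correction cancels exactly the extra term of that action.
\<close>
lemma tequiv_letter_gvec_swap:
  assumes "valid m n (B, v)" and "1 \<le> j" "j \<le> m + n" and "1 \<le> p" "p \<le> m + n"
  shows "tequiv m n (tmul (tmul (letter j) (gvec m j p)) (bas (B, v)))
    (smul ((-1) ^ (par m j * par m p) * (if p = j then qsub m j else 1)) (bas (B @ [j, p], v)))"
proof -
  define K where "K = B @ [p, j]"
  define k where "k = Suc (length B)"
  have "valid m n (K, v)"
    using assms by (auto simp: valid_def K_def)
  then have balance: "tequiv m n (bas (K, k # v)) (actT m K k v)"
    by (rule tequiv_balance) (simp_all add: K_def k_def)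
  show ?thesis
  proof (cases "p < j")
    case True
    then have "tmul (tmul (letter j) (gvec m j p)) (bas (B, v)) = vminus (bas (K, k # v)) (smul (qq - inverse qq) (bas (K, v)))"
      unfolding tmul_letter_gvec_bas K_def k_def by simp
    also have "tequiv m n \<dots> (vminus (actT m K k v) (smul (qq - inverse qq) (bas (K, v))))"
      using balance by (rule tequiv_vminus_left)
    also have "\<dots> = smul ((-1) ^ (par m j * par m p) * (if p = j then qsub m j else 1)) (bas (B @ [j, p], v))"
      using True unfolding K_def k_def actT_last_pair by (simp add: fun_eq_iff vminus_def vplus_def smul_def mult.commute)
    finally show ?thesis .
  next
    case False
    then have "tmul (tmul (letter j) (gvec m j p)) (bas (B, v)) = bas (K, k # v)"
      unfolding tmul_letter_gvec_bas K_def k_def by simp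
    also note balance
    also have "actT m K k v = smul ((-1) ^ (par m j * par m p) * (if p = j then qsub m j else 1)) (bas (B @ [j, p], v))"
      using False unfolding K_def k_def actT_last_pair by (auto simp: par_def mult.commute)
    finally show ?thesis .
  qed
qed

lemma tequiv_lmul_letter_gvec_prod:
  assumes j: "1 \<le> j" "j \<le> m + n" and P: "set P \<subseteq> {1..m + n}" and Q: "valid m n (Q, w)"
  shows "tequiv m n (lmul_letter j (foldr tmul (map (gvec m j) (rev P)) (bas (Q, w))))
    (smul ((-1) ^ (par m j * sum_list (map (par m) P)) * qsub m j ^ count_letter j P) (bas (Q @ j # P, w)))"
  using P
proof (induction P rule: rev_induct)
  case Nil
  show ?case
    by (simp add: lmul_letter_bas smul_def tequiv_refl)
next
  case (snoc p P)
  define Z where "Z = foldr tmul (map (gvec m j) (rev P)) (bas (Q, w))"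
  define \<alpha> where "\<alpha> = (-1::K) ^ (par m j * sum_list (map (par m) P)) * qsub m j ^ count_letter j P"
  define \<beta> where "\<beta> = (-1::K) ^ (par m j * par m p) * (if p = j then qsub m j else 1)"
  have p: "1 \<le> p" "p \<le> m + n"
    using snoc.prems by auto
  have Z: "Z \<in> freeT m n"
    unfolding Z_def using snoc.prems Q by (intro freeT_foldr_tmul freeT_bas) (auto intro!: freeT_gvec)
  have finite: "finite (supp Z)" "finite (supp (gvec m j p))"
    using Z freeT_gvec[OF p, of j] by (simp_all add: freeT_finite_supp)
  have "lmul_letter j (foldr tmul (map (gvec m j) (rev (P @ [p]))) (bas (Q, w)))
      = tmul (tmul (letter j) (gvec m j p)) Z"
    by (simp add: Z_def[symmetric] tmul_letter_left[symmetric] finite finite_supp_tmul tmul_assoc)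
  also have "\<dots> = ext (\<lambda>b. tmul (tmul (letter j) (gvec m j p)) (bas b)) Z"
    by (rule tmul_eq_ext_right)
  also have "tequiv m n \<dots> (ext (\<lambda>b. smul \<beta> (bas (fst b @ [j, p], snd b))) Z)"
    unfolding \<beta>_def using j p freeT_valid[OF Z]
    by (intro tequiv_ext) (metis prod.collapse tequiv_letter_gvec_swap)
  also have "\<dots> = smul \<beta> (lmul_letter p (lmul_letter j Z))"
    by (simp add: ext_smul_fun lmul_letter_eq_ext finite lmul_letter_ext lmul_letter_bas)
  also have "tequiv m n \<dots> (smul \<beta> (lmul_letter p (smul \<alpha> (bas (Q @ j # P, w)))))"
    using snoc.IH snoc.prems p unfolding Z_def \<alpha>_def by (intro tequiv_smul tequiv_lmul_letter) auto
  also have "\<dots> = smul ((-1) ^ (par m j * sum_list (map (par m) (P @ [p]))) * qsub m j ^ count_letter j (P @ [p]))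
      (bas (Q @ j # P @ [p], w))"
  proof -
    have "(-1) ^ (par m j * sum_list (map (par m) (P @ [p]))) * qsub m j ^ count_letter j (P @ [p]) = \<beta> * \<alpha>"
      unfolding \<alpha>_def \<beta>_def by (simp add: power_add distrib_left)
    then show ?thesis
      by (simp add: lmul_letter_smul lmul_letter_bas smul_smul)
  qed
  finally show ?case by simp
qed

lemma foldr_tmul_fvecs:
  "foldr tmul (map (fvec m j) (rev Q)) (bas ([], w)) = smul (inverse (qsub m j) ^ count_letter j Q) (bas (Q, w))"
proof (induction Q rule: rev_induct)
  case Nil
  show ?case by (simp add: smul_def)
next
  case (snoc p Q)
  have "foldr tmul (map (fvec m j) (rev (Q @ [p]))) (bas ([], w))
      = tmul (fvec m j p) (smul (inverse (qsub m j) ^ count_letter j Q) (bas (Q, w)))"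
    by (simp add: snoc.IH)
  also have "\<dots> = smul (inverse (qsub m j) ^ count_letter j (Q @ [p])) (bas (Q @ [p], w))"
    by (simp add: fvec_def tmul_smul_left tmul_smul_right tmul_bas_bas bmul_def smul_smul mult.commute)
  finally show ?case .
qed

lemma foldr_tmul_smul: "foldr tmul xs (smul a y) = smul a (foldr tmul xs y)"
  by (induction xs) (simp_all add: tmul_smul_right)

lemma freeT_tprod: "(\<And>x. x \<in> set xs \<Longrightarrow> x \<in> freeT m n) \<Longrightarrow> tprod xs \<in> freeT m n"
  unfolding tprod_def tone_def by (intro freeT_foldr_tmul freeT_bas) (auto simp: valid_def)

lemma tmul_tprod:
  assumes "\<And>x. x \<in> set xs \<Longrightarrow> finite (supp x)" and "finite (supp y)"
  shows "tmul (tprod xs) y = foldr tmul xs y"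
  using assms(1)
proof (induction xs)
  case Nil
  show ?case
    by (simp add: tprod_def tone_def tmul_bas_left bmul_def ext_bas_id assms(2))
next
  case (Cons x xs)
  have "finite (supp (tprod xs))"
    unfolding tprod_def tone_def using Cons.prems
    by (induction xs) (auto intro: finite_supp_tmul)
  then show ?case
    using Cons assms(2) by (simp add: tprod_def tmul_assoc finite_supp_tmul)
qed

lemma tequiv_Ldual_term:
  assumes j: "1 \<le> j" "j \<le> m + n" and valid: "valid m n (Q @ j # P, w)"
  shows "tequiv m n
    (lmul_letter j (tmul (tprod (map (gvec m j) (rev P) @ map (fvec m j) (rev Q))) (bas ([], w))))
    (smul ((-1) ^ (par m j * sum_list (map (par m) P)) *
        (qsub m j ^ count_letter j P * inverse (qsub m j) ^ count_letter j Q)) (bas (Q @ j # P, w)))"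
proof -
  have P: "set P \<subseteq> {1..m + n}" and Q: "valid m n (Q, w)"
    using valid by (auto simp: valid_def)
  have "finite (supp x)" if "x \<in> set (map (gvec m j) (rev P) @ map (fvec m j) (rev Q))" for x
    using that valid by (auto simp: valid_def intro!: freeT_finite_supp[OF freeT_gvec] freeT_finite_supp[OF freeT_fvec])
  then have "tmul (tprod (map (gvec m j) (rev P) @ map (fvec m j) (rev Q))) (bas ([], w))
      = foldr tmul (map (gvec m j) (rev P) @ map (fvec m j) (rev Q)) (bas ([], w))"
    by (intro tmul_tprod) simp_all
  also have "\<dots> = smul (inverse (qsub m j) ^ count_letter j Q) (foldr tmul (map (gvec m j) (rev P)) (bas (Q, w)))"
    by (simp add: foldr_tmul_fvecs foldr_tmul_smul)
  finally have "lmul_letter j (tmul (tprod (map (gvec m j) (rev P) @ map (fvec m j) (rev Q))) (bas ([], w)))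
      = smul (inverse (qsub m j) ^ count_letter j Q) (lmul_letter j (foldr tmul (map (gvec m j) (rev P)) (bas (Q, w))))"
    by (simp add: lmul_letter_smul)
  also have "tequiv m n \<dots> (smul (inverse (qsub m j) ^ count_letter j Q)
      (smul ((-1) ^ (par m j * sum_list (map (par m) P)) * qsub m j ^ count_letter j P) (bas (Q @ j # P, w))))"
    by (rule tequiv_smul[OF tequiv_lmul_letter_gvec_prod[OF j P Q]])
  finally show ?thesis
    by (simp add: smul_smul mult_ac)
qed

section \<open>The \<open>q\<close>-number\<close>

definition qnumber_sum :: "nat \<Rightarrow> nat \<Rightarrow> nat list \<Rightarrow> K" where
  "qnumber_sum m j I = (\<Sum>k\<in>{1..length I}. if I ! (k - 1) = j
     then qsub m j ^ count_letter j (drop k I) * inverse (qsub m j) ^ count_letter j (take (k - 1) I) else 0)"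

lemma qnumber_sum_Cons:
  "qnumber_sum m j (x # I) =
    (if x = j then qsub m j ^ count_letter j I else 0) + (if x = j then inverse (qsub m j) else 1) * qnumber_sum m j I"
proof -
  define h where "h I k = (if I ! (k - 1) = j
     then qsub m j ^ count_letter j (drop k I) * inverse (qsub m j) ^ count_letter j (take (k - 1) I) else 0)" for I k
  have "qnumber_sum m j (x # I) = h (x # I) 1 + (\<Sum>k\<in>{1..length I}. h (x # I) (Suc k))"
    unfolding qnumber_sum_def h_def[symmetric]
    by (simp add: sum.atLeast_Suc_atMost sum.shift_bounds_cl_Suc_ivl del: sum.cl_ivl_Suc)
  also have "(\<Sum>k\<in>{1..length I}. h (x # I) (Suc k)) = (if x = j then inverse (qsub m j) else 1) * qnumber_sum m j I"
    unfolding qnumber_sum_def h_def[symmetric] sum_distrib_left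
  proof (rule sum.cong[OF refl])
    fix k
    assume "k \<in> {1..length I}"
    then obtain k' where "k = Suc k'" by (cases k) auto
    then show "h (x # I) (Suc k) = (if x = j then inverse (qsub m j) else 1) * h I k"
      unfolding h_def by auto
  qed
  finally show ?thesis
    by (simp add: h_def)
qed

lemma qq_minus_inverse_nonzero: "qq - inverse qq \<noteq> 0"
proof -
  have "qq - inverse qq = Fract ([:0, 1:] * [:0, 1:] - 1) [:0, 1:]"
    unfolding qq_def by (simp add: diff_fract)
  moreover have "coeff ([:0, 1:] * [:0, 1:] - 1 :: complex poly) 2 \<noteq> 0"
    by (simp add: coeff_mult numeral_2_eq_2)
  then have "[:0, 1:] * [:0, 1:] - 1 \<noteq> (0 :: complex poly)"
    by auto
  ultimately show ?thesis
    by (simp add: Zero_fract_def eq_fract)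
qed

lemma qsub_minus_inverse_nonzero: "qsub m j - inverse (qsub m j) \<noteq> 0"
  using qq_minus_inverse_nonzero unfolding qsub_def by (auto simp: right_minus_eq)

lemma qsub_nonzero: "qsub m j \<noteq> 0"
  using qsub_minus_inverse_nonzero[of m j] by auto

lemma qnumber_sum_eq:
  "(qsub m j - inverse (qsub m j)) * qnumber_sum m j I = qsub m j ^ count_letter j I - inverse (qsub m j) ^ count_letter j I"
proof (induction I)
  case Nil
  show ?case by (simp add: qnumber_sum_def)
next
  case (Cons x I)
  show ?case
  proof (cases "x = j")
    case True
    have "(qsub m j - inverse (qsub m j)) * qnumber_sum m j (x # I) =
        (qsub m j - inverse (qsub m j)) * qsub m j ^ count_letter j I
        + inverse (qsub m j) * ((qsub m j - inverse (qsub m j)) * qnumber_sum m j I)"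
      unfolding qnumber_sum_Cons using True by (simp add: algebra_simps)
    also have "\<dots> = qsub m j ^ count_letter j (x # I) - inverse (qsub m j) ^ count_letter j (x # I)"
      unfolding Cons.IH using True qsub_nonzero[of m j] by (simp add: algebra_simps)
    finally show ?thesis .
  next
    case False
    then show ?thesis
      unfolding qnumber_sum_Cons using Cons.IH by simp
  qed
qed

lemma tequiv_lmul_letter_Ldual:
  assumes "valid m n (I, w)" and j: "1 \<le> j" "j \<le> m + n"
  shows "tequiv m n (lmul_letter j (Ldual m j (I, w))) (smul (qnumber_sum m j I) (bas (I, w)))"
proof -
  define T where "T k = tmul (tprod (map (gvec m j) (rev (drop k I)) @ map (fvec m j) (rev (take (k - 1) I)))) (bas ([], w))" for k
  define s where "s k = (-1::K) ^ (par m j * sum_list (map (par m) (drop k I)))" for k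
  define e where "e k = qsub m j ^ count_letter j (drop k I) * inverse (qsub m j) ^ count_letter j (take (k - 1) I)" for k
  have "lmul_letter j (Ldual m j (I, w)) =
      (\<lambda>c. \<Sum>k\<in>{1..length I}. smul (s k * (if I ! (k - 1) = j then 1 else 0)) (lmul_letter j (T k)) c)"
    unfolding Ldual_def Let_def lmul_letter_def smul_def T_def s_def by auto
  also have "tequiv m n \<dots> (\<lambda>c. \<Sum>k\<in>{1..length I}. smul (if I ! (k - 1) = j then e k else 0) (bas (I, w)) c)"
  proof (rule tequiv_sum)
    fix k
    assume k: "k \<in> {1..length I}"
    show "tequiv m n (smul (s k * (if I ! (k - 1) = j then 1 else 0)) (lmul_letter j (T k)))
        (smul (if I ! (k - 1) = j then e k else 0) (bas (I, w)))"
    proof (cases "I ! (k - 1) = j")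
      case True
      then have I: "take (k - 1) I @ j # drop k I = I"
        using k id_take_nth_drop[of "k - 1" I] by auto
      have "tequiv m n (smul (s k) (lmul_letter j (T k))) (smul (s k) (smul (s k * e k) (bas (I, w))))"
        using tequiv_Ldual_term[OF j, of "take (k - 1) I" "drop k I" w] assms(1)
        unfolding T_def s_def e_def I by (intro tequiv_smul) (simp add: mult.assoc)
      moreover have "s k * (s k * e k) = e k"
        unfolding s_def by (simp add: power_add[symmetric] mult.assoc[symmetric])
      ultimately show ?thesis
        using True by (simp add: smul_smul)
    next
      case False
      then show ?thesis
        by (simp add: smul_def tequiv_refl)
    qed
  qed
  also have "\<dots> = smul (qnumber_sum m j I) (bas (I, w))"
    unfolding qnumber_sum_def e_def smul_def by (simp add: sum_distrib_right fun_eq_iff if_distrib[of "\<lambda>a. a * _"])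
  finally show ?thesis .
qed

lemma freeT_Ldual:
  assumes "valid m n b" and "1 \<le> j" "j \<le> m + n"
  shows "Ldual m j b \<in> freeT m n"
proof -
  obtain I w where b: "b = (I, w)" by (cases b)
  have "Ldual m j b = (\<lambda>c. \<Sum>k\<in>{1..length I}. smul ((-1) ^ (par m j * sum_list (map (par m) (drop k I)))
      * (if I ! (k - 1) = j then 1 else 0))
      (tmul (tprod (map (gvec m j) (rev (drop k I)) @ map (fvec m j) (rev (take (k - 1) I)))) (bas ([], w))) c)"
    unfolding b Ldual_def Let_def smul_def by simp
  also have "\<dots> \<in> freeT m n"
    using assms(1) b
    by (intro freeT_sum freeT_smul freeT_tmul freeT_tprod freeT_bas)
      (auto simp: valid_def dest!: in_set_dropD in_set_takeD intro!: freeT_gvec freeT_fvec)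
  finally show ?thesis .
qed

lemma smul_Kvec_minus_Kinv:
  "smul (inverse (qsub m j - inverse (qsub m j))) (vminus (Kvec m j b) (Kinv m j b))
    = smul (qnumber_sum m j (fst b)) (bas b)"
proof -
  have qnumber: "qnumber_sum m j I = inverse (qsub m j - inverse (qsub m j))
      * (qsub m j ^ count_letter j I - inverse (qsub m j) ^ count_letter j I)" for I
    using qnumber_sum_eq[of m j I] qsub_minus_inverse_nonzero[of m j] by (simp add: field_simps)
  show ?thesis
    unfolding Kvec_def Kinv_def qnumber by (simp add: smul_def vminus_def fun_eq_iff algebra_simps)
qed

theorem lemma6p2:
  fixes m n j :: nat and x :: vec
  assumes "1 \<le> m" and "1 \<le> n" and "1 \<le> j" and "j \<le> m + n" and "x \<in> freeT m n"
  shows "tequiv m n (ext (Lvec j) (ext (Ldual m j) x))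
           (smul (inverse (qsub m j - inverse (qsub m j))) (vminus (ext (Kvec m j) x) (ext (Kinv m j) x)))"
proof -
  have "ext (Ldual m j) x \<in> freeT m n"
    using assms(3-5) by (intro freeT_ext freeT_Ldual) (auto dest: freeT_valid)
  then have "ext (Lvec j) (ext (Ldual m j) x) = ext (\<lambda>b. lmul_letter j (Ldual m j b)) x"
    by (simp add: ext_Lvec tmul_letter_left freeT_finite_supp lmul_letter_ext)
  also have "tequiv m n \<dots> (ext (\<lambda>b. smul (qnumber_sum m j (fst b)) (bas b)) x)"
    using assms(3-5) by (intro tequiv_ext) (metis freeT_valid prod.collapse tequiv_lmul_letter_Ldual)
  also have "\<dots> = smul (inverse (qsub m j - inverse (qsub m j))) (vminus (ext (Kvec m j) x) (ext (Kinv m j) x))"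
    unfolding ext_vminus_fun[symmetric] ext_smul_fun[symmetric] smul_Kvec_minus_Kinv ..
  finally show ?thesis .
qed

end
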